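(* Let $k\ge 1$ and let $p_k$ denote the fraction of the $k!$ permutation matrices $P$ of size $k\times k$ for which $\operatorname{sat}(n,P)=O(1)$ (i.e. $\operatorname{sat}(n,P)$ is bounded by a constant depending only on $P$, for all $n$). Then $p_k\to 1$ as $k\to\infty$; that is, almost all $k\times k$ permutation matrices $P$ have $\operatorname{sat}(n,P)=O(1)$.
   Context: A 0-1 matrix $A$ contains a 0-1 matrix $P$ if some submatrix of $A$ (obtained by selecting a subset of rows and a subset of columns, keeping their order) is equal to $P$ or can be turned into $P$ by changing some ones to zeroes; otherwise $A$ avoids $P$. A 0-1 matrix $A$ is saturating for $P$ if $A$ avoids $P$ but changing any zero entry of $A$ to a one creates a copy of $P$ (i.e. the resulting matrix contains $P$). The saturation function $\operatorname{sat}(n,P)$ is the minimum number of ones in an $n\times n$ 0-1 matrix that is saturating for $P$. *)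

theory Defs
  imports "HOL-Combinatorics.Permutations" Complex_Main
begin

text \<open>A 0-1 matrix of size m x n is represented by the set of positions of its ones,
  a subset of {..<m} x {..<n} (rows and columns indexed from 0).\<close>

definition is_01_matrix :: "nat \<Rightarrow> nat \<Rightarrow> (nat \<times> nat) set \<Rightarrow> bool" where
  "is_01_matrix m n A \<longleftrightarrow> A \<subseteq> {..<m} \<times> {..<n}"

definition contains :: "nat \<Rightarrow> nat \<Rightarrow> (nat \<times> nat) set \<Rightarrow> nat \<Rightarrow> nat \<Rightarrow> (nat \<times> nat) set \<Rightarrow> bool" where
  "contains m n A pr pc P \<longleftrightarrow>
     (\<exists>r c. strict_mono_on {..<pr} r \<and> strict_mono_on {..<pc} c \<and>
            r ` {..<pr} \<subseteq> {..<m} \<and> c ` {..<pc} \<subseteq> {..<n} \<and>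
            (\<forall>(i, j) \<in> P. (r i, c j) \<in> A))"

definition saturating :: "nat \<Rightarrow> (nat \<times> nat) set \<Rightarrow> nat \<Rightarrow> (nat \<times> nat) set \<Rightarrow> bool" where
  "saturating n A k P \<longleftrightarrow>
     is_01_matrix n n A \<and> \<not> contains n n A k k P \<and>
     (\<forall>x \<in> ({..<n} \<times> {..<n}) - A. contains n n (insert x A) k k P)"

definition sat :: "nat \<Rightarrow> nat \<Rightarrow> (nat \<times> nat) set \<Rightarrow> nat" where
  "sat n k P = (LEAST m. \<exists>A. saturating n A k P \<and> card A = m)"

definition perm_matrix :: "nat \<Rightarrow> (nat \<Rightarrow> nat) \<Rightarrow> (nat \<times> nat) set" where
  "perm_matrix k \<sigma> = {(i, \<sigma> i) | i. i < k}"

definition sat_bounded :: "nat \<Rightarrow> (nat \<times> nat) set \<Rightarrow> bool" where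
  "sat_bounded k P \<longleftrightarrow> (\<exists>C. \<forall>n. sat n k P \<le> C)"

end

(*
  Let P be the permutation matrix of sigma. Suppose an N x N matrix W avoids P, has an empty
  row and an empty column, and every zero of W is completed to a copy of P by turning it into a
  one. An occurrence of P never uses two copies of an empty line, so repeating the empty row and
  column keeps W saturating; hence sat(n, P) <= |W| for all n >= N, and sat(n, P) <= n^2 <= N^2
  for smaller n.

  Such a W is a maximal P-free extension of a core matrix in which a one anywhere in the empty row
  or column already completes a copy of P. The core is built from two gadgets, one for sigma and a
  transposed one for its inverse; each gadget consists of two copies of P, with the last and the
  first row deleted, whose missing entries would both lie in the same empty column. The core avoids
  P unless sigma or its inverse is irregular: it has an entry in a corner of the matrix, or maps some
  initial segment {..<t} with 2 <= t <= k - 2 onto an interval minus at most two consecutive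
  points. A union bound shows that at most a 1928/k fraction of the permutations is irregular or
  has an irregular inverse (k >= 8).
*)

theory Submission
  imports Defs "HOL-Combinatorics.Multiset_Permutations"
begin

section \<open>Embeddings of permutation matrices\<close>

lemma strict_mono_on_lessThan_gap:
  fixes r :: "nat \<Rightarrow> nat"
  assumes "strict_mono_on {..<k} r" "i \<le> j" "j < k"
  shows "r i + (j - i) \<le> r j"
  using assms(2,3)
proof (induction j rule: dec_induct)
  case (step j)
  then have "r j < r (Suc j)" using assms(1) by (auto intro: strict_mono_onD)
  then show ?case using step by auto
qed simp

lemma strict_mono_on_threshold:
  fixes r :: "nat \<Rightarrow> 'a::linorder"
  assumes mono: "strict_mono_on {..<k} r" and "i < k"
  shows "r i < R \<longleftrightarrow> i < card {j. j < k \<and> r j < R}"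
proof -
  define S where "S = {j. j < k \<and> r j < R}"
  define t where "t = (LEAST j. j \<notin> S)"
  have "t \<notin> S" unfolding t_def by (rule LeastI[of _ k]) (simp add: S_def)
  have "S = {..<t}"
  proof
    show "{..<t} \<subseteq> S" using not_less_Least unfolding t_def by blast
    show "S \<subseteq> {..<t}"
    proof
      fix j assume "j \<in> S"
      show "j \<in> {..<t}"
      proof (rule ccontr)
        assume "j \<notin> {..<t}"
        then have "t < k" "t \<le> j" using \<open>j \<in> S\<close> by (auto simp: S_def)
        then have "R \<le> r t" "r t \<le> r j"
          using \<open>t \<notin> S\<close> \<open>j \<in> S\<close> strict_mono_on_leD[OF mono] by (auto simp: S_def)
        then show False using \<open>j \<in> S\<close> unfolding S_def by (metis leD mem_Collect_eq order.trans)
      qed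
    qed
  qed
  moreover have "r i < R \<longleftrightarrow> i \<in> S" using \<open>i < k\<close> by (simp add: S_def)
  ultimately show ?thesis unfolding S_def[symmetric] by (metis card_lessThan lessThan_iff)
qed

lemma permutes_lessThan_less: "\<sigma> permutes {..<k} \<Longrightarrow> i < k \<Longrightarrow> \<sigma> i < k"
  by (metis lessThan_iff permutes_in_image)

lemma permutes_lessThan_onto:
  assumes "\<sigma> permutes {..<k}" "j < k"
  obtains i where "i < k" "\<sigma> i = j"
proof (rule that)
  show "inv \<sigma> j < k" using permutes_lessThan_less[OF permutes_inv[OF assms(1)] assms(2)] .
  show "\<sigma> (inv \<sigma> j) = j" using permutes_inverses(1)[OF assms(1)] .
qed

lemma strict_mono_on_minus_const:
  fixes c :: "nat \<Rightarrow> nat"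
  assumes "strict_mono_on S c" "\<And>v. v \<in> S \<Longrightarrow> a \<le> c v"
  shows "strict_mono_on S (\<lambda>v. c v - a)"
proof (rule strict_mono_onI)
  fix v w assume "v \<in> S" "w \<in> S" "v < w"
  then have "c v < c w" "a \<le> c v" using assms strict_mono_onD by blast+
  then show "c v - a < c w - a" by linarith
qed

lemma permutes_prefix_image_top:
  fixes \<sigma> :: "nat \<Rightarrow> nat"
  assumes perm: "\<sigma> permutes {..<k}" and "t \<le> k"
    and above: "\<And>i i'. i < t \<Longrightarrow> t \<le> i' \<Longrightarrow> i' < k \<Longrightarrow> \<sigma> i' < \<sigma> i"
  shows "\<sigma> ` {..<t} = {k - t..<k}"
proof -
  have inj: "inj_on \<sigma> A" for A using inj_on_subset[OF permutes_inj[OF perm] subset_UNIV] .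
  have "\<sigma> ` {..<t} \<subseteq> {k - t..<k}"
  proof
    fix u assume "u \<in> \<sigma> ` {..<t}"
    then obtain i where i: "i < t" "u = \<sigma> i" by auto
    have "\<sigma> ` {t..<k} \<subseteq> {..<u}" using above i by auto
    then have "card (\<sigma> ` {t..<k}) \<le> u" using card_mono[of "{..<u}"] by fastforce
    then have "k - t \<le> u" using card_image[OF inj] by simp
    then show "u \<in> {k - t..<k}" using i permutes_lessThan_less[OF perm] \<open>t \<le> k\<close> by auto
  qed
  moreover have "card (\<sigma> ` {..<t}) = card {k - t..<k}" using card_image[OF inj] \<open>t \<le> k\<close> by simp
  ultimately show ?thesis by (intro card_subset_eq) auto
qed

lemma permutes_lessThan_eqI:
  assumes "\<sigma> permutes {..<k}" "\<sigma>' permutes {..<k}" "\<And>x. x < k \<Longrightarrow> \<sigma> x = \<sigma>' x"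
  shows "\<sigma> = \<sigma>'"
proof
  fix x
  show "\<sigma> x = \<sigma>' x"
    using assms permutes_not_in[of \<sigma> "{..<k}" x] permutes_not_in[of \<sigma>' "{..<k}" x] by (cases "x < k") simp_all
qed

definition embeds_perm :: "(nat \<times> nat) set \<Rightarrow> nat \<Rightarrow> (nat \<Rightarrow> nat) \<Rightarrow> (nat \<Rightarrow> nat) \<Rightarrow> (nat \<Rightarrow> nat) \<Rightarrow> bool"
  where "embeds_perm A k \<sigma> r c \<longleftrightarrow>
    strict_mono_on {..<k} r \<and> strict_mono_on {..<k} c \<and> (\<forall>i<k. (r i, c (\<sigma> i)) \<in> A)"

lemma contains_perm_matrix_iff:
  assumes perm: "\<sigma> permutes {..<k}" and A: "A \<subseteq> {..<m} \<times> {..<n}"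
  shows "contains m n A k k (perm_matrix k \<sigma>) \<longleftrightarrow> (\<exists>r c. embeds_perm A k \<sigma> r c)"
proof
  assume "contains m n A k k (perm_matrix k \<sigma>)"
  then obtain r c where "strict_mono_on {..<k} r" "strict_mono_on {..<k} c"
    "\<forall>(i, j) \<in> perm_matrix k \<sigma>. (r i, c j) \<in> A"
    unfolding contains_def by blast
  then have "embeds_perm A k \<sigma> r c" unfolding embeds_perm_def perm_matrix_def by blast
  then show "\<exists>r c. embeds_perm A k \<sigma> r c" by blast
next
  assume "\<exists>r c. embeds_perm A k \<sigma> r c"
  then obtain r c where r: "strict_mono_on {..<k} r" and c: "strict_mono_on {..<k} c"
    and entries: "\<And>i. i < k \<Longrightarrow> (r i, c (\<sigma> i)) \<in> A"
    unfolding embeds_perm_def by blast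
  have "r ` {..<k} \<subseteq> {..<m}" using entries A by fastforce
  moreover have "c ` {..<k} \<subseteq> {..<n}"
  proof
    fix y assume "y \<in> c ` {..<k}"
    then obtain j where "j < k" "y = c j" by auto
    then obtain i where "i < k" "\<sigma> i = j" using permutes_lessThan_onto[OF perm] by metis
    then show "y \<in> {..<n}" using entries[of i] A \<open>y = c j\<close> by auto
  qed
  ultimately show "contains m n A k k (perm_matrix k \<sigma>)"
    using r c entries unfolding contains_def perm_matrix_def by blast
qed

lemma contains_mono:
  assumes "contains m n A p q P" "A \<subseteq> B" "m \<le> m'" "n \<le> n'"
  shows "contains m' n' B p q P"
proof -
  obtain r c where rc: "strict_mono_on {..<p} r" "strict_mono_on {..<q} c"
    "r ` {..<p} \<subseteq> {..<m}" "c ` {..<q} \<subseteq> {..<n}" "\<forall>(i, j) \<in> P. (r i, c j) \<in> A"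
    using assms(1) unfolding contains_def by blast
  have "r ` {..<p} \<subseteq> {..<m'}" "c ` {..<q} \<subseteq> {..<n'}" "\<forall>(i, j) \<in> P. (r i, c j) \<in> B"
    using rc(3-5) assms(2-4) by auto
  with rc(1,2) show ?thesis unfolding contains_def by (intro exI[of _ r] exI[of _ c]) simp
qed

lemma embeds_perm_image:
  assumes "embeds_perm A k \<sigma> r c" "strict_mono f" "strict_mono g"
  shows "embeds_perm (map_prod f g ` A) k \<sigma> (f \<circ> r) (g \<circ> c)"
  unfolding embeds_perm_def
proof (intro conjI allI impI)
  show "strict_mono_on {..<k} (f \<circ> r)" "strict_mono_on {..<k} (g \<circ> c)"
    using assms unfolding embeds_perm_def monotone_on_def by (simp_all add: strict_mono_less)
  fix i assume "i < k"
  then show "((f \<circ> r) i, (g \<circ> c) (\<sigma> i)) \<in> map_prod f g ` A"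
    using assms(1) unfolding embeds_perm_def by (auto intro: rev_image_eqI)
qed

lemma embeds_perm_mono: "embeds_perm A k \<sigma> r c \<Longrightarrow> A \<subseteq> B \<Longrightarrow> embeds_perm B k \<sigma> r c"
  unfolding embeds_perm_def by blast

lemma strict_mono_add_left: "strict_mono ((+) (a::nat))"
  by (simp add: strict_mono_def)

lemma embeds_perm_transpose:
  assumes perm: "\<sigma> permutes {..<k}" and "embeds_perm A k \<sigma> r c"
  shows "embeds_perm (prod.swap ` A) k (inv \<sigma>) c r"
  unfolding embeds_perm_def
proof (intro conjI allI impI)
  show "strict_mono_on {..<k} c" "strict_mono_on {..<k} r"
    using assms(2) unfolding embeds_perm_def by auto
  fix j assume "j < k"
  then have "(r (inv \<sigma> j), c (\<sigma> (inv \<sigma> j))) \<in> A"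
    using assms(2) permutes_lessThan_less[OF permutes_inv[OF perm]] unfolding embeds_perm_def by blast
  then show "(c j, r (inv \<sigma> j)) \<in> prod.swap ` A"
    using permutes_inverses(1)[OF perm] by force
qed

section \<open>Saturating matrices\<close>

lemma maximal_avoiding_extension:
  assumes "finite Z" "C \<subseteq> Z" "\<not> contains m n C p q P"
  obtains W where "C \<subseteq> W" "W \<subseteq> Z" "\<not> contains m n W p q P"
    "\<And>z. z \<in> Z - W \<Longrightarrow> contains m n (insert z W) p q P"
proof -
  define \<W> where "\<W> = {W. W \<subseteq> Z \<and> \<not> contains m n W p q P}"
  have "\<W> \<subseteq> Pow Z" unfolding \<W>_def by blast
  then have "finite \<W>" using \<open>finite Z\<close> finite_subset by blast
  moreover have "C \<in> \<W>" unfolding \<W>_def using assms(2,3) by simp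
  ultimately obtain W where W: "W \<in> \<W>" "C \<subseteq> W" and maximal: "\<And>W'. W' \<in> \<W> \<Longrightarrow> W \<subseteq> W' \<Longrightarrow> W = W'"
    using finite_has_maximal2[of \<W> C] by auto
  from W(1) have "W \<subseteq> Z" "\<not> contains m n W p q P" unfolding \<W>_def by auto
  moreover have "contains m n (insert z W) p q P" if z: "z \<in> Z - W" for z
  proof (rule ccontr)
    assume "\<not> contains m n (insert z W) p q P"
    then have "insert z W \<in> \<W>" using \<open>W \<subseteq> Z\<close> z unfolding \<W>_def by simp
    then show False using maximal[of "insert z W"] z by blast
  qed
  ultimately show thesis using that W(2) by blast
qed

lemma sat_le_card: "saturating n A k P \<Longrightarrow> sat n k P \<le> card A"
  unfolding sat_def by (rule Least_le) (rule exI[of _ A], simp)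

lemma exists_saturating:
  assumes "P \<noteq> {}"
  obtains A where "saturating n A k P"
proof -
  have "\<not> contains n n {} k k P" using assms unfolding contains_def by auto
  with maximal_avoiding_extension[of "{..<n} \<times> {..<n}" "{}"]
  obtain A where "A \<subseteq> {..<n} \<times> {..<n}" "\<not> contains n n A k k P"
    "\<And>z. z \<in> {..<n} \<times> {..<n} - A \<Longrightarrow> contains n n (insert z A) k k P"
    by (metis empty_subsetI finite_SigmaI finite_lessThan)
  then have "saturating n A k P" unfolding saturating_def is_01_matrix_def by simp
  then show thesis by (rule that)
qed

lemma sat_le_square:
  assumes "P \<noteq> {}"
  shows "sat n k P \<le> n * n"
proof -
  obtain A where A: "saturating n A k P" using exists_saturating[OF assms] .
  then have "card A \<le> card ({..<n} \<times> {..<n})"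
    unfolding saturating_def is_01_matrix_def by (intro card_mono) auto
  then show ?thesis using sat_le_card[OF A] by (simp add: card_cartesian_product)
qed

text \<open>\<open>stretch_matrix i j e W\<close> below inserts \<open>e\<close> lines in front of row \<open>i\<close> and column \<open>j\<close>
  of \<open>W\<close>; when these are empty this just repeats them, and \<open>squash\<close> maps the copies back.\<close>

definition stretch :: "nat \<Rightarrow> nat \<Rightarrow> nat \<Rightarrow> nat" where
  "stretch i e p = (if p < i then p else p + e)"

definition squash :: "nat \<Rightarrow> nat \<Rightarrow> nat \<Rightarrow> nat" where
  "squash i e x = (if x \<le> i then x else if x \<le> i + e then i else x - e)"

lemma squash_stretch [simp]: "squash i e (stretch i e p) = p"
  unfolding squash_def stretch_def by auto

lemma stretch_squash: "squash i e x \<noteq> i \<Longrightarrow> stretch i e (squash i e x) = x"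
  unfolding squash_def stretch_def by auto

lemma stretch_less: "p < N \<Longrightarrow> stretch i e p < N + e"
  unfolding stretch_def by auto

lemma squash_less: "x < N + e \<Longrightarrow> i < N \<Longrightarrow> squash i e x < N"
  unfolding squash_def by auto

lemma mono_squash: "mono (squash i e)"
  unfolding squash_def by (intro monoI) auto

lemma squash_less_squash:
  assumes "x < y" "squash i e x \<noteq> i" "squash i e y \<noteq> i"
  shows "squash i e x < squash i e y"
proof -
  have "squash i e x \<le> squash i e y" using mono_squash assms(1) by (simp add: monoD)
  moreover have "squash i e x \<noteq> squash i e y"
    using stretch_squash[OF assms(2)] stretch_squash[OF assms(3)] assms(1) by force
  ultimately show ?thesis by simp
qed

lemma strict_mono_on_if_mono_left_inverse:
  fixes s :: "'a::linorder \<Rightarrow> 'b::linorder"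
  assumes "mono g" "\<And>p. p \<in> S \<Longrightarrow> g (s p) = p"
  shows "strict_mono_on S s"
proof (rule strict_mono_onI)
  fix p q assume "p \<in> S" "q \<in> S" "p < q"
  show "s p < s q"
  proof (rule ccontr)
    assume "\<not> s p < s q"
    then have "g (s q) \<le> g (s p)" using \<open>mono g\<close> by (simp add: monoD)
    then show False using assms(2) \<open>p \<in> S\<close> \<open>q \<in> S\<close> \<open>p < q\<close> by simp
  qed
qed

definition stretch_matrix :: "nat \<Rightarrow> nat \<Rightarrow> nat \<Rightarrow> (nat \<times> nat) set \<Rightarrow> (nat \<times> nat) set" where
  "stretch_matrix i j e W = map_prod (stretch i e) (stretch j e) ` W"

lemma card_stretch_matrix: "card (stretch_matrix i j e W) = card W"
proof -
  have "inj (stretch i e)" "inj (stretch j e)" by (metis injI squash_stretch)+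
  then show ?thesis unfolding stretch_matrix_def by (intro card_image inj_on_subset[OF prod.inj_map]) auto
qed

locale stretchable =
  fixes N i j :: nat and W :: "(nat \<times> nat) set"
  assumes bounded: "W \<subseteq> {..<N} \<times> {..<N}" and i: "i < N" and j: "j < N"
    and empty: "\<And>p q. (p, q) \<in> W \<Longrightarrow> p \<noteq> i \<and> q \<noteq> j"
begin

lemma mem_stretch_iff:
  "(x, y) \<in> stretch_matrix i j e W \<longleftrightarrow> x < N + e \<and> y < N + e \<and> (squash i e x, squash j e y) \<in> W"
proof
  assume "(x, y) \<in> stretch_matrix i j e W"
  then obtain p q where "(p, q) \<in> W" "x = stretch i e p" "y = stretch j e q"
    unfolding stretch_matrix_def by auto
  then show "x < N + e \<and> y < N + e \<and> (squash i e x, squash j e y) \<in> W"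
    using bounded stretch_less by auto
next
  assume xy: "x < N + e \<and> y < N + e \<and> (squash i e x, squash j e y) \<in> W"
  then have "x = stretch i e (squash i e x)" "y = stretch j e (squash j e y)"
    using empty stretch_squash by metis+
  then show "(x, y) \<in> stretch_matrix i j e W"
    unfolding stretch_matrix_def using xy by (metis map_prod_simp rev_image_eqI)
qed

lemma stretch_bounded: "stretch_matrix i j e W \<subseteq> {..<N + e} \<times> {..<N + e}"
  using mem_stretch_iff by auto

lemma stretch_avoids:
  assumes perm: "\<sigma> permutes {..<k}" and avoids: "\<not> contains N N W k k (perm_matrix k \<sigma>)"
  shows "\<not> contains (N + e) (N + e) (stretch_matrix i j e W) k k (perm_matrix k \<sigma>)"
proof
  assume "contains (N + e) (N + e) (stretch_matrix i j e W) k k (perm_matrix k \<sigma>)"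
  then obtain r c where "embeds_perm (stretch_matrix i j e W) k \<sigma> r c"
    using contains_perm_matrix_iff[OF perm stretch_bounded] by blast
  then have r: "strict_mono_on {..<k} r" and c: "strict_mono_on {..<k} c"
    and entries: "\<And>l. l < k \<Longrightarrow> (squash i e (r l), squash j e (c (\<sigma> l))) \<in> W"
    unfolding embeds_perm_def by (simp_all add: mem_stretch_iff)
  have row: "squash i e (r l) \<noteq> i" and col: "squash j e (c (\<sigma> l)) \<noteq> j" if "l < k" for l
    using entries[OF that] empty by blast+
  have "embeds_perm W k \<sigma> (squash i e \<circ> r) (squash j e \<circ> c)"
    unfolding embeds_perm_def
  proof (intro conjI allI impI strict_mono_onI)
    fix a b assume "a \<in> {..<k}" "b \<in> {..<k}" "a < b"
    then have "r a < r b" "squash i e (r a) \<noteq> i" "squash i e (r b) \<noteq> i"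
      using strict_mono_onD[OF r] row by auto
    then show "(squash i e \<circ> r) a < (squash i e \<circ> r) b" by (simp add: squash_less_squash)
    obtain a' b' where "a' < k" "\<sigma> a' = a" "b' < k" "\<sigma> b' = b"
      using permutes_lessThan_onto[OF perm] \<open>a \<in> {..<k}\<close> \<open>b \<in> {..<k}\<close> by (metis lessThan_iff)
    then have "c a < c b" "squash j e (c a) \<noteq> j" "squash j e (c b) \<noteq> j"
      using strict_mono_onD[OF c] col[of a'] col[of b'] \<open>a \<in> {..<k}\<close> \<open>b \<in> {..<k}\<close> \<open>a < b\<close>
      by auto
    then show "(squash j e \<circ> c) a < (squash j e \<circ> c) b" by (simp add: squash_less_squash)
  qed (use entries in auto)
  then show False using avoids contains_perm_matrix_iff[OF perm bounded] by blast
qed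

lemma stretch_saturates:
  assumes perm: "\<sigma> permutes {..<k}"
    and saturates: "\<And>z. z \<in> {..<N} \<times> {..<N} - W \<Longrightarrow> contains N N (insert z W) k k (perm_matrix k \<sigma>)"
    and z: "(x, y) \<in> {..<N + e} \<times> {..<N + e} - stretch_matrix i j e W"
  shows "contains (N + e) (N + e) (insert (x, y) (stretch_matrix i j e W)) k k (perm_matrix k \<sigma>)"
proof -
  let ?z = "(squash i e x, squash j e y)"
  have "?z \<in> {..<N} \<times> {..<N} - W" using z mem_stretch_iff squash_less i j by auto
  moreover have insert_bounded: "insert ?z W \<subseteq> {..<N} \<times> {..<N}" using calculation bounded by blast
  ultimately obtain r c where emb: "embeds_perm (insert ?z W) k \<sigma> r c"
    using saturates contains_perm_matrix_iff[OF perm] by blast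
  \<comment> \<open>lift the embedding back along \<open>squash\<close>, sending \<open>?z\<close> to \<open>(x, y)\<close>\<close>
  define s where "s p = (if p = squash i e x then x else stretch i e p)" for p
  define u where "u q = (if q = squash j e y then y else stretch j e q)" for q
  have squash_s: "squash i e (s p) = p" and squash_u: "squash j e (u q) = q" for p q
    unfolding s_def u_def by auto
  have "strict_mono_on {..<N} s" "strict_mono_on {..<N} u"
    using strict_mono_on_if_mono_left_inverse mono_squash squash_s squash_u by metis+
  moreover have r_less: "r l < N" and c_less: "c (\<sigma> l) < N" if "l < k" for l
    using emb insert_bounded that unfolding embeds_perm_def by auto
  moreover have "c v < N" if "v < k" for v
  proof -
    obtain l where "l < k" "\<sigma> l = v" using permutes_lessThan_onto[OF perm \<open>v < k\<close>] .
    then show ?thesis using c_less by blast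
  qed
  ultimately have "strict_mono_on {..<k} (s \<circ> r)" "strict_mono_on {..<k} (u \<circ> c)"
    using emb unfolding embeds_perm_def monotone_on_def by auto
  moreover have "(s (r l), u (c (\<sigma> l))) \<in> insert (x, y) (stretch_matrix i j e W)" if "l < k" for l
  proof -
    have "(r l, c (\<sigma> l)) \<in> insert ?z W" using emb that unfolding embeds_perm_def by blast
    moreover have "s (r l) < N + e" "u (c (\<sigma> l)) < N + e"
      using r_less[OF that] c_less[OF that] z stretch_less unfolding s_def u_def by auto
    ultimately show ?thesis using mem_stretch_iff squash_s squash_u unfolding s_def u_def by auto
  qed
  ultimately have "embeds_perm (insert (x, y) (stretch_matrix i j e W)) k \<sigma> (s \<circ> r) (u \<circ> c)"
    unfolding embeds_perm_def by simp
  moreover have "insert (x, y) (stretch_matrix i j e W) \<subseteq> {..<N + e} \<times> {..<N + e}"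
    using z stretch_bounded by blast
  ultimately show ?thesis using contains_perm_matrix_iff[OF perm] by blast
qed

lemma saturating_stretch:
  assumes perm: "\<sigma> permutes {..<k}" and sat: "saturating N W k (perm_matrix k \<sigma>)"
  shows "saturating (N + e) (stretch_matrix i j e W) k (perm_matrix k \<sigma>)"
  using stretch_bounded stretch_avoids[OF perm] stretch_saturates[OF perm] sat
  unfolding saturating_def is_01_matrix_def by auto

lemma sat_bounded_if_saturating:
  assumes perm: "\<sigma> permutes {..<k}" and "0 < k" and sat: "saturating N W k (perm_matrix k \<sigma>)"
  shows "sat_bounded k (perm_matrix k \<sigma>)"
proof -
  have nonempty: "perm_matrix k \<sigma> \<noteq> {}" using \<open>0 < k\<close> unfolding perm_matrix_def by auto
  have "card W \<le> N * N"
    using card_mono[OF _ bounded] by (simp add: card_cartesian_product)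
  have "sat n k (perm_matrix k \<sigma>) \<le> N * N" for n
  proof (cases "N \<le> n")
    case True
    then obtain e where "n = N + e" using le_Suc_ex by blast
    then show ?thesis
      using sat_le_card[OF saturating_stretch[OF perm sat, of e]] card_stretch_matrix[of i j e W]
        \<open>card W \<le> N * N\<close> by simp
  next
    case False
    then have "n * n \<le> N * N" by (simp add: mult_le_mono)
    then show ?thesis using sat_le_square[OF nonempty, of n k] by simp
  qed
  then show ?thesis unfolding sat_bounded_def by blast
qed

end

section \<open>The column gadget\<close>

definition head_col :: "nat \<Rightarrow> nat \<Rightarrow> nat \<Rightarrow> nat" where
  "head_col k b v = (if v + 1 < b then k + v else if v + 1 = b then 2*k else if v = b then 2*k + 1
     else if v = b + 1 then 2*k + 2 else 2*k + 3 + v)"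

definition tail_col :: "nat \<Rightarrow> nat \<Rightarrow> nat \<Rightarrow> nat" where
  "tail_col k a v = (if v + 1 < a then v else if v + 1 = a then 2*k else if v = a then 2*k + 1
     else if v = a + 1 then 2*k + 2 else 3*k + 3 + v)"

text \<open>Rows \<open>0, \<dots>, k - 2\<close> of the gadget carry \<open>P\<close> without its last row, rows \<open>k, \<dots>, 2k - 2\<close>
  carry \<open>P\<close> without its first row. In both copies the column of the deleted entry is sent to the
  empty column \<open>2k + 1\<close>, and its two neighbours to the shared columns \<open>2k\<close> and \<open>2k + 2\<close>;
  the remaining columns of the first copy lie in \<open>[k, 3k + 3)\<close>, those of the second copy outside.
  So a one anywhere in column \<open>2k + 1\<close> completes a copy of \<open>P\<close>.\<close>

definition gadget :: "nat \<Rightarrow> (nat \<Rightarrow> nat) \<Rightarrow> (nat \<times> nat) set" where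
  "gadget k \<tau> = {(i, head_col k (\<tau> (k - 1)) (\<tau> i)) | i. i < k - 1} \<union>
                {(k - 1 + i, tail_col k (\<tau> 0) (\<tau> i)) | i. 0 < i \<and> i < k}"

lemma strict_mono_head_col: "strict_mono_on {..<k} (head_col k b)"
  by (intro strict_mono_onI) (auto simp: head_col_def)

lemma strict_mono_tail_col: "strict_mono_on {..<k} (tail_col k a)"
  by (intro strict_mono_onI) (auto simp: tail_col_def)

lemma head_col_range:
  "v < k \<Longrightarrow> v \<noteq> b \<Longrightarrow> k \<le> head_col k b v \<and> head_col k b v < 3*k + 3 \<and> head_col k b v \<noteq> 2*k + 1"
  unfolding head_col_def by auto

lemma tail_col_range:
  "v < k \<Longrightarrow> v \<noteq> a \<Longrightarrow>
    (tail_col k a v < k \<or> tail_col k a v = 2*k \<or> tail_col k a v = 2*k + 2 \<or> 3*k + 3 \<le> tail_col k a v) \<and>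
    tail_col k a v \<noteq> 2*k + 1 \<and> tail_col k a v < 4*k + 3"
  unfolding tail_col_def by auto

lemma head_col_at_gap:
  "0 < b \<Longrightarrow> head_col k b (b - 1) = 2*k" "head_col k b b = 2*k + 1" "head_col k b (b + 1) = 2*k + 2"
  unfolding head_col_def by auto

lemma tail_col_at_gap:
  "0 < a \<Longrightarrow> tail_col k a (a - 1) = 2*k" "tail_col k a a = 2*k + 1" "tail_col k a (a + 1) = 2*k + 2"
  unfolding tail_col_def by auto

lemma mem_gadget_cases:
  assumes "(p, q) \<in> gadget k \<tau>"
  shows "(p < k - 1 \<and> q = head_col k (\<tau> (k - 1)) (\<tau> p)) \<or>
    (\<exists>j. 0 < j \<and> j < k \<and> p = k - 1 + j \<and> q = tail_col k (\<tau> 0) (\<tau> j))"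
  using assms unfolding gadget_def by auto

lemma gadget_bounds:
  assumes perm: "\<tau> permutes {..<k}" and pq: "(p, q) \<in> gadget k \<tau>"
  shows "p < 2*k \<and> q < 4*k + 3 \<and> q \<noteq> 2*k + 1"
  using mem_gadget_cases[OF pq]
proof
  assume head: "p < k - 1 \<and> q = head_col k (\<tau> (k - 1)) (\<tau> p)"
  then have "\<tau> p \<noteq> \<tau> (k - 1)" "\<tau> p < k"
    using permutes_inj[OF perm] permutes_lessThan_less[OF perm] by (auto dest: injD)
  then show ?thesis using head head_col_range[of "\<tau> p" k "\<tau> (k - 1)"] by auto
next
  assume "\<exists>j. 0 < j \<and> j < k \<and> p = k - 1 + j \<and> q = tail_col k (\<tau> 0) (\<tau> j)"
  then obtain j where tail: "0 < j" "j < k" "p = k - 1 + j" "q = tail_col k (\<tau> 0) (\<tau> j)" by blast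
  then have "\<tau> j \<noteq> \<tau> 0" "\<tau> j < k"
    using permutes_inj[OF perm] permutes_lessThan_less[OF perm] by (auto dest: injD)
  then show ?thesis using tail tail_col_range[of "\<tau> j" k "\<tau> 0"] by auto
qed

text \<open>The deleted entry is placed in row \<open>x\<close>: after the first copy if \<open>x \<ge> k - 1\<close>,
  before the second copy otherwise.\<close>

lemma gadget_insert_gap_embeds:
  "\<exists>r c. embeds_perm (insert (x, 2*k + 1) (gadget k \<tau>)) k \<tau> r c"
proof (cases "k - 1 \<le> x")
  case True
  define r where "r i = (if i < k - 1 then i else x)" for i
  have "strict_mono_on {..<k} r"
    by (intro strict_mono_onI) (use True in \<open>auto simp: r_def\<close>)
  moreover have "(r i, head_col k (\<tau> (k - 1)) (\<tau> i)) \<in> insert (x, 2*k + 1) (gadget k \<tau>)" if "i < k" for i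
  proof (cases "i < k - 1")
    case True
    then show ?thesis unfolding gadget_def r_def by auto
  next
    case False
    then have "i = k - 1" using that by simp
    then show ?thesis unfolding r_def by (simp add: head_col_at_gap)
  qed
  ultimately show ?thesis unfolding embeds_perm_def using strict_mono_head_col by blast
next
  case False
  define r where "r i = (if i = 0 then x else k - 1 + i)" for i
  have "strict_mono_on {..<k} r"
    by (intro strict_mono_onI) (use False in \<open>auto simp: r_def\<close>)
  moreover have "(r i, tail_col k (\<tau> 0) (\<tau> i)) \<in> insert (x, 2*k + 1) (gadget k \<tau>)" if "i < k" for i
  proof (cases "i = 0")
    case False
    then show ?thesis unfolding gadget_def r_def using that by auto
  next
    case True
    then show ?thesis unfolding r_def by (simp add: tail_col_at_gap)
  qed
  ultimately show ?thesis unfolding embeds_perm_def using strict_mono_tail_col by blast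
qed

section \<open>Regular permutations\<close>

lemma strict_mono_on_preimage_interval:
  fixes c :: "nat \<Rightarrow> 'a::linorder"
  assumes mono: "strict_mono_on {..<k} c"
  obtains a b where "{u. u < k \<and> L \<le> c u \<and> c u < U} = {a..<b}" "b \<le> k"
proof (cases "{u. u < k \<and> L \<le> c u \<and> c u < U} = {}")
  case True
  then show thesis using that[of 0 0] by simp
next
  case False
  define M where "M = {u. u < k \<and> L \<le> c u \<and> c u < U}"
  have "finite M" unfolding M_def by simp
  then have min: "Min M \<in> M" and max: "Max M \<in> M" using False unfolding M_def[symmetric] by auto
  have "M = {Min M..<Max M + 1}"
  proof
    show "M \<subseteq> {Min M..<Max M + 1}" using \<open>finite M\<close> by (auto simp: less_Suc_eq_le)
    show "{Min M..<Max M + 1} \<subseteq> M"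
    proof
      fix u assume u: "u \<in> {Min M..<Max M + 1}"
      have "Max M < k" using max unfolding M_def by simp
      then have "c (Min M) \<le> c u" "c u \<le> c (Max M)"
        using u strict_mono_on_leD[OF mono] by auto
      then show "u \<in> M" using min max u \<open>Max M < k\<close> unfolding M_def by auto
    qed
  qed
  moreover have "Max M + 1 \<le> k" using max unfolding M_def by simp
  ultimately show thesis using that unfolding M_def by blast
qed

lemma subset_short_interval:
  fixes X :: "nat set"
  assumes "X \<subseteq> {a..<b}" "b \<le> a + 2"
  obtains x l where "l \<le> 2" "X = {x..<x + l}"
proof -
  have "X \<subseteq> {a, a + 1}" using assms by auto
  then have "X = {} \<or> X = {a} \<or> X = {a + 1} \<or> X = {a, a + 1}" by blast
  moreover have "{a, a + 1} = {a..<a + 2}" by auto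
  ultimately show thesis using that[of 0] that[of 1 a] that[of 1 "a + 1"] that[of 2 a] by fastforce
qed

definition corner_free :: "nat \<Rightarrow> (nat \<Rightarrow> nat) \<Rightarrow> bool" where
  "corner_free k \<tau> \<longleftrightarrow> \<tau> 0 \<notin> {0, k - 1} \<and> \<tau> (k - 1) \<notin> {0, k - 1}"

text \<open>The \<open>t\<close>-sets obtained from an interval by deleting at most two consecutive elements; the
  parametrisation also admits some sets reaching beyond \<open>k\<close>, which only enlarge the count.\<close>

definition gapped_intervals :: "nat \<Rightarrow> nat \<Rightarrow> nat set set" where
  "gapped_intervals k t =
    (\<lambda>(a, l, d). {a..<a + t + l} - {a + d..<a + d + l}) ` ({..k - t} \<times> {..2} \<times> {..t})"

definition has_gapped_prefix :: "nat \<Rightarrow> (nat \<Rightarrow> nat) \<Rightarrow> bool" where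
  "has_gapped_prefix k \<tau> \<longleftrightarrow> (\<exists>t. 2 \<le> t \<and> t + 2 \<le> k \<and> \<tau> ` {..<t} \<in> gapped_intervals k t)"

definition regular_perm :: "nat \<Rightarrow> (nat \<Rightarrow> nat) \<Rightarrow> bool" where
  "regular_perm k \<tau> \<longleftrightarrow> corner_free k \<tau> \<and> \<not> has_gapped_prefix k \<tau>"

lemma corner_free_pos: "\<tau> permutes {..<k} \<Longrightarrow> corner_free k \<tau> \<Longrightarrow> 0 < k"
  using permutes_not_in[of \<tau> "{..<k}" 0] unfolding corner_free_def by (cases k) auto

lemma interval_minus_short_interval_in_gapped_intervals:
  assumes "V \<subseteq> {a..<b}" "b \<le> k" "{a..<b} - V = {x..<x + l}" "l \<le> 2" "card V = t" "0 < t"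
  shows "V \<in> gapped_intervals k t"
proof -
  have V: "V = {a..<b} - {x..<x + l}" using assms(1,3) by blast
  have "finite V" using assms(1) finite_subset by blast
  then have "l = card {a..<b} - t" "t \<le> card {a..<b}"
    using card_Diff_subset[OF _ assms(1)] card_mono[OF _ assms(1)] assms(3,5) by simp_all
  then have b: "b = a + t + l" using \<open>0 < t\<close> by simp
  define d where "d = (if l = 0 then 0 else x - a)"
  have "{x..<x + l} = {a + d..<a + d + l} \<and> d \<le> t"
  proof (cases "l = 0")
    case False
    then have "x \<in> {a..<b}" "x + l - 1 \<in> {a..<b}" using assms(3) by auto
    then show ?thesis using False b unfolding d_def by auto
  qed (simp add: d_def)
  then have "V = {a..<a + t + l} - {a + d..<a + d + l}" "d \<le> t" using V b by auto
  moreover have "a \<le> k - t" using b assms(2) by simp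
  ultimately show ?thesis unfolding gapped_intervals_def using assms(4)
    by (intro image_eqI[of _ _ "(a, l, d)"]) auto
qed

locale gadget_embedding =
  fixes k :: nat and \<tau> r c :: "nat \<Rightarrow> nat"
  assumes perm: "\<tau> permutes {..<k}" and corner_free: "corner_free k \<tau>"
    and embeds: "embeds_perm (gadget k \<tau>) k \<tau> r c"
begin

lemma r_mono: "strict_mono_on {..<k} r" and c_mono: "strict_mono_on {..<k} c"
  and entry: "i < k \<Longrightarrow> (r i, c (\<tau> i)) \<in> gadget k \<tau>"
  using embeds unfolding embeds_perm_def by auto

lemma \<tau>_less: "i < k \<Longrightarrow> \<tau> i < k"
  using permutes_lessThan_less[OF perm] .

lemma \<tau>_eq_iff: "\<tau> i = \<tau> j \<longleftrightarrow> i = j"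
  using permutes_inj[OF perm] by (auto dest: injD)

lemma corners: "0 < \<tau> 0" "\<tau> 0 + 1 < k" "0 < \<tau> (k - 1)" "\<tau> (k - 1) + 1 < k"
proof -
  have "0 < k" using corner_free_pos[OF perm corner_free] .
  then show "0 < \<tau> 0" "\<tau> 0 + 1 < k" "0 < \<tau> (k - 1)" "\<tau> (k - 1) + 1 < k"
    using corner_free \<tau>_less[of 0] \<tau>_less[of "k - 1"] unfolding corner_free_def by auto
qed

lemma three_le_k: "3 \<le> k"
  using corners by linarith

lemma c_ne_gap:
  assumes "u < k"
  shows "c u \<noteq> 2*k + 1"
proof -
  obtain i where "i < k" "\<tau> i = u" using permutes_lessThan_onto[OF perm assms] .
  then show ?thesis using gadget_bounds[OF perm entry[OF \<open>i < k\<close>]] by simp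
qed

lemma no_gap_between:
  assumes "0 < x" "x + 1 < k" "c (x - 1) = 2*k" "c (x + 1) = 2*k + 2"
  shows False
proof -
  have "c (x - 1) < c x" "c x < c (x + 1)" using strict_mono_onD[OF c_mono] assms(1,2) by auto
  then show False using c_ne_gap[of x] assms by simp
qed

definition head_rows :: nat where
  "head_rows = card {i. i < k \<and> r i < k - 1}"

lemma head_row_iff: "i < k \<Longrightarrow> r i < k - 1 \<longleftrightarrow> i < head_rows"
  unfolding head_rows_def using strict_mono_on_threshold[OF r_mono] .

lemma head_entry:
  assumes "i < k" "i < head_rows"
  shows "r i < k - 1" "c (\<tau> i) = head_col k (\<tau> (k - 1)) (\<tau> (r i))"
proof -
  show head: "r i < k - 1" using assms head_row_iff by simp
  then show "c (\<tau> i) = head_col k (\<tau> (k - 1)) (\<tau> (r i))"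
    using mem_gadget_cases[OF entry[OF \<open>i < k\<close>]] by auto
qed

lemma tail_entry:
  assumes "i < k" "head_rows \<le> i"
  obtains j where "0 < j" "j < k" "r i = k - 1 + j" "c (\<tau> i) = tail_col k (\<tau> 0) (\<tau> j)"
proof -
  have "\<not> r i < k - 1" using assms head_row_iff by simp
  then show thesis using mem_gadget_cases[OF entry[OF \<open>i < k\<close>]] that by auto
qed

lemma head_rows_pos: "0 < head_rows"
proof (rule ccontr)
  assume "\<not> 0 < head_rows"
  then have "head_rows \<le> 0" "head_rows \<le> k - 1" by simp_all
  moreover have "0 < k" "k - 1 < k" using three_le_k by simp_all
  ultimately obtain j j' where "0 < j" "r 0 = k - 1 + j" "j' < k" "r (k - 1) = k - 1 + j'"
    using tail_entry by metis
  moreover have "r 0 + (k - 1) \<le> r (k - 1)"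
    using strict_mono_on_lessThan_gap[OF r_mono, of 0 "k - 1"] three_le_k by simp
  ultimately show False by linarith
qed

lemma head_rows_less: "head_rows < k"
proof (rule ccontr)
  assume "\<not> head_rows < k"
  then have "r (k - 1) < k - 1" using head_entry(1)[of "k - 1"] three_le_k by simp
  moreover have "r 0 + (k - 1) \<le> r (k - 1)"
    using strict_mono_on_lessThan_gap[OF r_mono, of 0 "k - 1"] three_le_k by simp
  ultimately show False by linarith
qed

text \<open>With a single head row the \<open>k - 1\<close> remaining rows fill the second copy exactly, so
  \<open>c\<close> agrees with \<open>tail_col\<close> next to \<open>\<tau> 0\<close>, forcing \<open>c (\<tau> 0) = 2k + 1\<close>.\<close>

lemma head_rows_ne_1: "head_rows \<noteq> 1"
proof
  assume one: "head_rows = 1"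
  have tail: "c (\<tau> i) = tail_col k (\<tau> 0) (\<tau> i)" if "0 < i" "i < k" for i
  proof -
    have "head_rows \<le> i" "head_rows \<le> 1" "head_rows \<le> k - 1" "1 < k" "k - 1 < k"
      using one that three_le_k by simp_all
    then obtain j j1 jk where j: "r i = k - 1 + j" "c (\<tau> i) = tail_col k (\<tau> 0) (\<tau> j)"
      and "0 < j1" "r 1 = k - 1 + j1" and "jk < k" "r (k - 1) = k - 1 + jk"
      using tail_entry \<open>i < k\<close> by metis
    moreover have "r 1 + (i - 1) \<le> r i" "r i + (k - 1 - i) \<le> r (k - 1)"
      using strict_mono_on_lessThan_gap[OF r_mono, of 1 i] strict_mono_on_lessThan_gap[OF r_mono, of i "k - 1"]
        that by auto
    ultimately have "j = i" using j(1) that by linarith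
    then show ?thesis using j(2) by simp
  qed
  have "\<tau> 0 - 1 < k" "\<tau> 0 + 1 < k" using corners by simp_all
  then obtain i1 i2 where i1: "i1 < k" "\<tau> i1 = \<tau> 0 - 1" and i2: "i2 < k" "\<tau> i2 = \<tau> 0 + 1"
    using permutes_lessThan_onto[OF perm] by metis
  have "0 < i1" "0 < i2" using i1 i2 corners by (auto intro: gr0I)
  then have "c (\<tau> 0 - 1) = 2*k" "c (\<tau> 0 + 1) = 2*k + 2"
    using tail[of i1] tail[of i2] i1 i2 tail_col_at_gap corners by auto
  then show False using no_gap_between corners by blast
qed

lemma head_rows_ne_pred: "head_rows \<noteq> k - 1"
proof
  assume pred: "head_rows = k - 1"
  have head: "c (\<tau> i) = head_col k (\<tau> (k - 1)) (\<tau> i)" if "i < k - 1" for i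
  proof -
    have "r 0 + i \<le> r i" "r i + (k - 2 - i) \<le> r (k - 2)"
      using strict_mono_on_lessThan_gap[OF r_mono, of 0 i] strict_mono_on_lessThan_gap[OF r_mono, of i "k - 2"]
        that by auto
    moreover have "r (k - 2) < k - 1" using head_entry(1)[of "k - 2"] pred three_le_k by simp
    ultimately have "r i = i" using that by linarith
    then show ?thesis using head_entry(2)[of i] pred that by simp
  qed
  have "\<tau> (k - 1) - 1 < k" "\<tau> (k - 1) + 1 < k" using corners by simp_all
  then obtain i1 i2 where i1: "i1 < k" "\<tau> i1 = \<tau> (k - 1) - 1" and i2: "i2 < k" "\<tau> i2 = \<tau> (k - 1) + 1"
    using permutes_lessThan_onto[OF perm] by metis
  have "i1 \<noteq> k - 1" "i2 \<noteq> k - 1" using i1 i2 corners by auto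
  then have "c (\<tau> (k - 1) - 1) = 2*k" "c (\<tau> (k - 1) + 1) = 2*k + 2"
    using head[of i1] head[of i2] i1 i2 head_col_at_gap corners by auto
  then show False using no_gap_between corners by blast
qed

lemma head_prefix_cols:
  assumes "u \<in> \<tau> ` {..<head_rows}"
  shows "k \<le> c u \<and> c u < 3*k + 3"
proof -
  obtain i where i: "i < head_rows" "u = \<tau> i" using assms by auto
  then have "i < k" using head_rows_less by simp
  then have "r i < k - 1" "c u = head_col k (\<tau> (k - 1)) (\<tau> (r i))" using head_entry i by auto
  moreover have "\<tau> (r i) \<noteq> \<tau> (k - 1)" "\<tau> (r i) < k" using \<open>r i < k - 1\<close> \<tau>_eq_iff \<tau>_less by auto
  ultimately show ?thesis using head_col_range by simp
qed

lemma tail_cols: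
  assumes "u < k" "u \<notin> \<tau> ` {..<head_rows}"
  shows "c u < k \<or> c u = 2*k \<or> c u = 2*k + 2 \<or> 3*k + 3 \<le> c u"
proof -
  obtain i where i: "i < k" "\<tau> i = u" using permutes_lessThan_onto[OF perm \<open>u < k\<close>] .
  then have "head_rows \<le> i" using assms(2) by (auto simp: not_le)
  then obtain j where "0 < j" "j < k" "r i = k - 1 + j" "c (\<tau> i) = tail_col k (\<tau> 0) (\<tau> j)"
    using tail_entry[OF \<open>i < k\<close>] by blast
  moreover have "\<tau> j \<noteq> \<tau> 0" "\<tau> j < k" using \<open>0 < j\<close> \<open>j < k\<close> \<tau>_eq_iff \<tau>_less by auto
  ultimately show ?thesis using tail_col_range i(2) by auto
qed

lemma shared_cols_short:
  obtains a b where "{u. u < k \<and> 2*k \<le> c u \<and> c u < 2*k + 3} = {a..<b}" "b \<le> a + 2"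
proof -
  obtain a b where shared: "{u. u < k \<and> 2*k \<le> c u \<and> c u < 2*k + 3} = {a..<b}"
    using strict_mono_on_preimage_interval[OF c_mono] .
  have "c u \<in> {2*k, 2*k + 2}" if "u \<in> {a..<b}" for u
  proof -
    have "u < k" "2*k \<le> c u" "c u < 2*k + 3" using that shared by blast+
    then show ?thesis using c_ne_gap[of u] by auto
  qed
  then have "c ` {a..<b} \<subseteq> {2*k, 2*k + 2}" by blast
  moreover have "inj_on c {a..<b}"
    using strict_mono_on_imp_inj_on[OF c_mono] shared by (auto intro: inj_on_subset)
  ultimately have "card {a..<b} \<le> card {2*k, 2*k + 2::nat}" by (intro card_inj_on_le) auto
  then show thesis using that shared by simp
qed

text \<open>The head rows use the columns of the first copy, which form an interval of \<open>u\<close>'s;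
  the second copy can only interleave with it in the shared columns \<open>2k\<close> and \<open>2k + 2\<close>.\<close>

lemma head_prefix_gapped: "\<tau> ` {..<head_rows} \<in> gapped_intervals k head_rows"
proof -
  let ?V = "\<tau> ` {..<head_rows}"
  obtain a b where M: "{u. u < k \<and> k \<le> c u \<and> c u < 3*k + 3} = {a..<b}" "b \<le> k"
    using strict_mono_on_preimage_interval[OF c_mono] .
  obtain a' b' where shared: "{u. u < k \<and> 2*k \<le> c u \<and> c u < 2*k + 3} = {a'..<b'}" "b' \<le> a' + 2"
    using shared_cols_short .
  have "{a..<b} - ?V \<subseteq> {a'..<b'}"
  proof
    fix u assume u: "u \<in> {a..<b} - ?V"
    then have "u < k" "k \<le> c u" "c u < 3*k + 3" using M(1) by blast+
    then have "2*k \<le> c u" "c u < 2*k + 3" using tail_cols[of u] u by auto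
    then show "u \<in> {a'..<b'}" using shared(1) \<open>u < k\<close> by blast
  qed
  then obtain x l where l: "l \<le> 2" and gap: "{a..<b} - ?V = {x..<x + l}"
    using subset_short_interval shared(2) by metis
  have V: "?V \<subseteq> {a..<b}"
  proof
    fix u assume "u \<in> ?V"
    then have "u < k" using head_rows_less \<tau>_less by auto
    then show "u \<in> {a..<b}" using head_prefix_cols[OF \<open>u \<in> ?V\<close>] M(1) by blast
  qed
  have "card ?V = head_rows"
    using card_image[of \<tau> "{..<head_rows}"] permutes_inj[OF perm] by (simp add: inj_on_subset)
  then show ?thesis
    using interval_minus_short_interval_in_gapped_intervals[OF V M(2) gap l _ head_rows_pos] by simp
qed

end

lemma gadget_avoids:
  assumes "\<tau> permutes {..<k}" "regular_perm k \<tau>"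
  shows "\<not> embeds_perm (gadget k \<tau>) k \<tau> r c"
proof
  assume "embeds_perm (gadget k \<tau>) k \<tau> r c"
  then interpret gadget_embedding k \<tau> r c
    using assms unfolding regular_perm_def by unfold_locales auto
  have "2 \<le> head_rows" "head_rows + 2 \<le> k"
    using head_rows_pos head_rows_less head_rows_ne_1 head_rows_ne_pred by auto
  then have "has_gapped_prefix k \<tau>"
    using head_prefix_gapped unfolding has_gapped_prefix_def by blast
  then show False using assms(2) unfolding regular_perm_def by simp
qed

section \<open>The core matrix\<close>

text \<open>The empty columns of the two gadgets become the empty column \<open>6k + 4\<close> and the empty
  row \<open>4k + 1\<close> of the core.\<close>

definition core :: "nat \<Rightarrow> (nat \<Rightarrow> nat) \<Rightarrow> (nat \<times> nat) set" where
  "core k \<sigma> = map_prod id ((+) (4*k + 3)) ` gadget k \<sigma> \<union>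
    map_prod ((+) (2*k)) id ` prod.swap ` gadget k (inv \<sigma>)"

lemma mem_core_cases:
  assumes "(p, q) \<in> core k \<sigma>"
  shows "(4*k + 3 \<le> q \<and> (p, q - (4*k + 3)) \<in> gadget k \<sigma>) \<or> (2*k \<le> p \<and> (q, p - 2*k) \<in> gadget k (inv \<sigma>))"
  using assms unfolding core_def by auto

lemma core_bounds:
  assumes perm: "\<sigma> permutes {..<k}" and pq: "(p, q) \<in> core k \<sigma>"
  shows "p < 8*k + 6" "q < 8*k + 6" "p \<noteq> 4*k + 1" "q \<noteq> 6*k + 4" "p < 2*k \<longleftrightarrow> 4*k + 3 \<le> q"
  using mem_core_cases[OF pq] gadget_bounds[OF perm, of p "q - (4*k + 3)"]
    gadget_bounds[OF permutes_inv[OF perm], of q "p - 2*k"] by auto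

lemma core_insert_col_contains:
  assumes perm: "\<sigma> permutes {..<k}" and "x < 8*k + 6"
  shows "contains (8*k + 6) (8*k + 6) (insert (x, 6*k + 4) (core k \<sigma>)) k k (perm_matrix k \<sigma>)"
proof -
  obtain r c where "embeds_perm (insert (x, 2*k + 1) (gadget k \<sigma>)) k \<sigma> r c"
    using gadget_insert_gap_embeds by blast
  then have "embeds_perm (map_prod id ((+) (4*k + 3)) ` insert (x, 2*k + 1) (gadget k \<sigma>)) k \<sigma>
      (id \<circ> r) ((+) (4*k + 3) \<circ> c)"
    using embeds_perm_image strict_mono_id strict_mono_add_left by blast
  moreover have "map_prod id ((+) (4*k + 3)) ` insert (x, 2*k + 1) (gadget k \<sigma>) \<subseteq>
      insert (x, 6*k + 4) (core k \<sigma>)"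
    unfolding core_def by auto
  ultimately have "embeds_perm (insert (x, 6*k + 4) (core k \<sigma>)) k \<sigma> (id \<circ> r) ((+) (4*k + 3) \<circ> c)"
    by (rule embeds_perm_mono)
  moreover have "insert (x, 6*k + 4) (core k \<sigma>) \<subseteq> {..<8*k + 6} \<times> {..<8*k + 6}"
    using core_bounds[OF perm] \<open>x < 8*k + 6\<close> by auto
  ultimately show ?thesis using contains_perm_matrix_iff[OF perm] by blast
qed

lemma core_insert_row_contains:
  assumes perm: "\<sigma> permutes {..<k}" and "y < 8*k + 6"
  shows "contains (8*k + 6) (8*k + 6) (insert (4*k + 1, y) (core k \<sigma>)) k k (perm_matrix k \<sigma>)"
proof -
  obtain r c where "embeds_perm (insert (y, 2*k + 1) (gadget k (inv \<sigma>))) k (inv \<sigma>) r c"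
    using gadget_insert_gap_embeds by blast
  then have "embeds_perm (prod.swap ` insert (y, 2*k + 1) (gadget k (inv \<sigma>))) k \<sigma> c r"
    using embeds_perm_transpose[OF permutes_inv[OF perm]] permutes_inv_inv[OF perm] by metis
  then have "embeds_perm (map_prod ((+) (2*k)) id ` prod.swap ` insert (y, 2*k + 1) (gadget k (inv \<sigma>))) k \<sigma>
      ((+) (2*k) \<circ> c) (id \<circ> r)"
    using embeds_perm_image strict_mono_id strict_mono_add_left by blast
  moreover have "map_prod ((+) (2*k)) id ` prod.swap ` insert (y, 2*k + 1) (gadget k (inv \<sigma>)) \<subseteq>
      insert (4*k + 1, y) (core k \<sigma>)"
    unfolding core_def by auto
  ultimately have "embeds_perm (insert (4*k + 1, y) (core k \<sigma>)) k \<sigma> ((+) (2*k) \<circ> c) (id \<circ> r)"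
    by (rule embeds_perm_mono)
  moreover have "insert (4*k + 1, y) (core k \<sigma>) \<subseteq> {..<8*k + 6} \<times> {..<8*k + 6}"
    using core_bounds[OF perm] \<open>y < 8*k + 6\<close> by auto
  ultimately show ?thesis using contains_perm_matrix_iff[OF perm] by blast
qed

lemma regular_perm_prefix_not_top:
  assumes perm: "\<sigma> permutes {..<k}" and reg: "regular_perm k \<sigma>" and "0 < t" "t < k"
  shows "\<sigma> ` {..<t} \<noteq> {k - t..<k}"
proof
  assume top: "\<sigma> ` {..<t} = {k - t..<k}"
  have corner: "\<sigma> 0 \<noteq> k - 1" "\<sigma> (k - 1) \<noteq> 0" and "\<not> has_gapped_prefix k \<sigma>"
    using reg unfolding regular_perm_def corner_free_def by auto
  consider "t = 1" | "t = k - 1" | "2 \<le> t \<and> t + 2 \<le> k" using \<open>0 < t\<close> \<open>t < k\<close> by linarith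
  then show False
  proof cases
    case 1
    moreover have "{k - 1..<k} = {k - 1}" using \<open>t < k\<close> 1 by auto
    ultimately have "{\<sigma> 0} = {k - 1}" using top by (simp add: lessThan_Suc)
    then show False using corner by simp
  next
    case 2
    have "\<sigma> (k - 1) \<notin> \<sigma> ` {..<t}" using 2 permutes_inj[OF perm] by (auto dest: injD)
    then show False using top 2 corner permutes_lessThan_less[OF perm, of "k - 1"] \<open>t < k\<close> by auto
  next
    case 3
    have "{k - t..<k} \<in> gapped_intervals k t"
      unfolding gapped_intervals_def using 3 by (intro image_eqI[of _ _ "(k - t, 0, 0)"]) auto
    then show False using \<open>\<not> has_gapped_prefix k \<sigma>\<close> 3 top unfolding has_gapped_prefix_def by auto
  qed
qed

locale core_embedding =
  fixes k :: nat and \<sigma> r c :: "nat \<Rightarrow> nat"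
  assumes perm: "\<sigma> permutes {..<k}" and embeds: "embeds_perm (core k \<sigma>) k \<sigma> r c"
begin

lemma r_mono: "strict_mono_on {..<k} r" and c_mono: "strict_mono_on {..<k} c"
  and entry: "i < k \<Longrightarrow> (r i, c (\<sigma> i)) \<in> core k \<sigma>"
  using embeds unfolding embeds_perm_def by auto

definition top_rows :: nat where
  "top_rows = card {i. i < k \<and> r i < 2*k}"

lemma top_rows_le: "top_rows \<le> k"
  unfolding top_rows_def using card_mono[of "{..<k}" "{i. i < k \<and> r i < 2*k}"] by auto

lemma top_entry:
  assumes "i < k" "i < top_rows"
  shows "4*k + 3 \<le> c (\<sigma> i) \<and> (r i, c (\<sigma> i) - (4*k + 3)) \<in> gadget k \<sigma>"
  using strict_mono_on_threshold[OF r_mono \<open>i < k\<close>, of "2*k"] mem_core_cases[OF entry[OF \<open>i < k\<close>]]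
    core_bounds(5)[OF perm entry[OF \<open>i < k\<close>]] assms unfolding top_rows_def by auto

lemma bottom_entry:
  assumes "i < k" "top_rows \<le> i"
  shows "c (\<sigma> i) < 2*k \<and> 2*k \<le> r i \<and> (c (\<sigma> i), r i - 2*k) \<in> gadget k (inv \<sigma>)"
proof -
  have "2*k \<le> r i" "c (\<sigma> i) < 4*k + 3"
    using strict_mono_on_threshold[OF r_mono \<open>i < k\<close>, of "2*k"] core_bounds(5)[OF perm entry[OF \<open>i < k\<close>]]
      assms unfolding top_rows_def by auto
  then have "(c (\<sigma> i), r i - 2*k) \<in> gadget k (inv \<sigma>)" using mem_core_cases[OF entry[OF \<open>i < k\<close>]] by auto
  then show ?thesis using gadget_bounds[OF permutes_inv[OF perm]] \<open>2*k \<le> r i\<close> by auto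
qed

lemma all_top_embeds:
  assumes "top_rows = k"
  shows "embeds_perm (gadget k \<sigma>) k \<sigma> r (\<lambda>v. c v - (4*k + 3))"
proof -
  have "4*k + 3 \<le> c v" if "v \<in> {..<k}" for v
    using top_entry assms permutes_lessThan_onto[OF perm] that by (metis lessThan_iff)
  then show ?thesis
    unfolding embeds_perm_def using r_mono strict_mono_on_minus_const[OF c_mono] top_entry assms by auto
qed

lemma all_bottom_embeds:
  assumes "top_rows = 0"
  shows "embeds_perm (gadget k (inv \<sigma>)) k (inv \<sigma>) c (\<lambda>i. r i - 2*k)"
proof -
  have "embeds_perm (prod.swap ` gadget k (inv \<sigma>)) k \<sigma> (\<lambda>i. r i - 2*k) c"
    unfolding embeds_perm_def using c_mono strict_mono_on_minus_const[OF r_mono] bottom_entry assms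
    by force
  then have "embeds_perm (prod.swap ` prod.swap ` gadget k (inv \<sigma>)) k (inv \<sigma>) c (\<lambda>i. r i - 2*k)"
    by (rule embeds_perm_transpose[OF perm])
  then show ?thesis by (simp add: image_image)
qed

text \<open>Top rows sit in columns \<open>\<ge> 4k + 3\<close>, bottom rows in columns \<open>< 2k\<close>.\<close>

lemma mixed_prefix_top:
  assumes "0 < top_rows" "top_rows < k"
  shows "\<sigma> ` {..<top_rows} = {k - top_rows..<k}"
proof (rule permutes_prefix_image_top[OF perm top_rows_le])
  fix i i' assume "i < top_rows" "top_rows \<le> i'" "i' < k"
  then have "c (\<sigma> i') < c (\<sigma> i)" using top_entry[of i] bottom_entry[of i'] assms by auto
  then show "\<sigma> i' < \<sigma> i"
    using strict_mono_on_less[OF c_mono] permutes_lessThan_less[OF perm] \<open>i' < k\<close> \<open>i < top_rows\<close> assms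
    by auto
qed

end

lemma core_avoids:
  assumes perm: "\<sigma> permutes {..<k}" and reg: "regular_perm k \<sigma>" "regular_perm k (inv \<sigma>)"
  shows "\<not> embeds_perm (core k \<sigma>) k \<sigma> r c"
proof
  assume "embeds_perm (core k \<sigma>) k \<sigma> r c"
  then interpret core_embedding k \<sigma> r c using perm by unfold_locales
  consider "top_rows = k" | "top_rows = 0" | "0 < top_rows \<and> top_rows < k" using top_rows_le by linarith
  then show False
  proof cases
    case 1
    then show False using all_top_embeds gadget_avoids[OF perm reg(1)] by blast
  next
    case 2
    then show False using all_bottom_embeds gadget_avoids[OF permutes_inv[OF perm] reg(2)] by blast
  next
    case 3
    then show False using mixed_prefix_top regular_perm_prefix_not_top[OF perm reg(1)] by blast
  qed
qed

lemma saturating_core_extension: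
  assumes perm: "\<sigma> permutes {..<k}" and reg: "regular_perm k \<sigma>" "regular_perm k (inv \<sigma>)"
  obtains W where "saturating (8*k + 6) W k (perm_matrix k \<sigma>)" "stretchable (8*k + 6) (4*k + 1) (6*k + 4) W"
proof -
  define N where "N = 8*k + 6"
  define P where "P = perm_matrix k \<sigma>"
  define Z where "Z = {..<N} \<times> {..<N} - ({4*k + 1} \<times> UNIV \<union> UNIV \<times> {6*k + 4})"
  have core_Z: "core k \<sigma> \<subseteq> Z"
  proof
    fix z assume "z \<in> core k \<sigma>"
    moreover obtain p q where "z = (p, q)" by fastforce
    ultimately show "z \<in> Z" using core_bounds[OF perm, of p q] unfolding Z_def N_def by auto
  qed
  moreover have "Z \<subseteq> {..<N} \<times> {..<N}" unfolding Z_def by blast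
  ultimately have core_avoids_P: "\<not> contains N N (core k \<sigma>) k k P"
    using core_avoids[OF perm reg] contains_perm_matrix_iff[OF perm] unfolding P_def by blast
  have "finite Z" unfolding Z_def by simp
  obtain W where W: "core k \<sigma> \<subseteq> W" "W \<subseteq> Z" "\<not> contains N N W k k P"
    and maximal: "\<And>z. z \<in> Z - W \<Longrightarrow> contains N N (insert z W) k k P"
    using maximal_avoiding_extension[OF \<open>finite Z\<close> core_Z core_avoids_P] by blast
  have "contains N N (insert z W) k k P" if z: "z \<in> {..<N} \<times> {..<N} - W" for z
  proof (cases "z \<in> Z")
    case True
    then show ?thesis using maximal z by blast
  next
    case False
    then obtain x y where xy: "z = (x, y)" "x < N" "y < N" "x = 4*k + 1 \<or> y = 6*k + 4"
      using z unfolding Z_def by auto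
    then have "contains N N (insert z (core k \<sigma>)) k k P"
      using core_insert_row_contains[OF perm] core_insert_col_contains[OF perm]
      unfolding N_def P_def by auto
    then show ?thesis using contains_mono W(1) by blast
  qed
  then have "saturating N W k P"
    using W(2,3) unfolding saturating_def is_01_matrix_def Z_def by blast
  moreover have "stretchable N (4*k + 1) (6*k + 4) W"
    using W(2) unfolding Z_def N_def by unfold_locales auto
  ultimately show thesis using that unfolding N_def P_def by blast
qed

lemma sat_bounded_if_regular:
  assumes perm: "\<sigma> permutes {..<k}" and reg: "regular_perm k \<sigma>" "regular_perm k (inv \<sigma>)"
  shows "sat_bounded k (perm_matrix k \<sigma>)"
proof -
  obtain W where sat: "saturating (8*k + 6) W k (perm_matrix k \<sigma>)"
    and stretchable: "stretchable (8*k + 6) (4*k + 1) (6*k + 4) W"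
    using saturating_core_extension[OF perm reg] .
  interpret stretchable "8*k + 6" "4*k + 1" "6*k + 4" W by (fact stretchable)
  show ?thesis
    using sat_bounded_if_saturating[OF perm _ sat] corner_free_pos[OF perm] reg(1)
    unfolding regular_perm_def by blast
qed

section \<open>Counting irregular permutations\<close>

lemma card_permutes_prefix_image_le:
  assumes "t \<le> k"
  shows "card {\<sigma>. \<sigma> permutes {..<k} \<and> \<sigma> ` {..<t} = S} \<le> fact t * fact (k - t)"
proof -
  define F where "F = {\<sigma>. \<sigma> permutes {..<k} \<and> \<sigma> ` {..<t} = S}"
  have inj: "inj_on \<sigma> A" if "\<sigma> permutes {..<k}" for \<sigma> :: "nat \<Rightarrow> nat" and A
    using inj_on_subset[OF permutes_inj[OF that] subset_UNIV] .
  show ?thesis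
  proof (cases "F = {}")
    case True
    then show ?thesis unfolding F_def[symmetric] by simp
  next
    case False
    then obtain \<sigma> where "\<sigma> permutes {..<k}" "\<sigma> ` {..<t} = S" unfolding F_def by auto
    then have S: "S \<subseteq> {..<k}" "card S = t"
      using permutes_lessThan_less assms card_image[OF inj] by fastforce+
    define \<phi> where "\<phi> \<sigma> = (map \<sigma> [0..<t], map \<sigma> [t..<k])" for \<sigma> :: "nat \<Rightarrow> nat"
    have "inj_on \<phi> F"
    proof (rule inj_onI)
      fix \<sigma> \<sigma>' assume F: "\<sigma> \<in> F" "\<sigma>' \<in> F" and eq: "\<phi> \<sigma> = \<phi> \<sigma>'"
      show "\<sigma> = \<sigma>'"
      proof (rule permutes_lessThan_eqI)
        show "\<sigma> permutes {..<k}" "\<sigma>' permutes {..<k}" using F unfolding F_def by auto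
        fix x assume "x < k"
        then show "\<sigma> x = \<sigma>' x" using eq unfolding \<phi>_def by (cases "x < t") (auto simp: map_eq_conv)
      qed
    qed
    moreover have "\<phi> ` F \<subseteq> permutations_of_set S \<times> permutations_of_set ({..<k} - S)"
    proof
      fix y assume "y \<in> \<phi> ` F"
      then obtain \<sigma> where \<sigma>: "\<sigma> permutes {..<k}" "\<sigma> ` {..<t} = S" "y = \<phi> \<sigma>"
        unfolding F_def by auto
      have "{t..<k} = {..<k} - {..<t}" using assms by auto
      then have "\<sigma> ` {t..<k} = \<sigma> ` {..<k} - \<sigma> ` {..<t}"
        by (simp only: image_set_diff[OF permutes_inj[OF \<sigma>(1)]])
      then have "\<sigma> ` {t..<k} = {..<k} - S" using \<sigma>(2) permutes_image[OF \<sigma>(1)] by simp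
      then show "y \<in> permutations_of_set S \<times> permutations_of_set ({..<k} - S)"
        using \<sigma>(2,3) inj[OF \<sigma>(1)] unfolding \<phi>_def permutations_of_set_def
        by (auto simp: distinct_map atLeast0LessThan)
    qed
    ultimately have "card F \<le> card (permutations_of_set S \<times> permutations_of_set ({..<k} - S))"
      using S(1) by (intro card_inj_on_le) (auto intro: finite_subset)
    also have "\<dots> = fact t * fact (k - t)"
      using S by (simp add: card_cartesian_product card_Diff_subset finite_subset)
    finally show ?thesis unfolding F_def .
  qed
qed

lemma permutes_prefix_image_fraction_le:
  assumes "t \<le> k" "finite \<F>"
  shows "real (card {\<sigma>. \<sigma> permutes {..<k} \<and> \<sigma> ` {..<t} \<in> \<F>}) / fact k \<le> card \<F> / (k choose t)"
proof -
  have "{\<sigma>. \<sigma> permutes {..<k} \<and> \<sigma> ` {..<t} \<in> \<F>} = (\<Union>S\<in>\<F>. {\<sigma>. \<sigma> permutes {..<k} \<and> \<sigma> ` {..<t} = S})"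
    by auto
  then have "card {\<sigma>. \<sigma> permutes {..<k} \<and> \<sigma> ` {..<t} \<in> \<F>} \<le>
      (\<Sum>S\<in>\<F>. card {\<sigma>. \<sigma> permutes {..<k} \<and> \<sigma> ` {..<t} = S})"
    using card_UN_le[OF assms(2)] by simp
  also have "\<dots> \<le> (\<Sum>S\<in>\<F>. fact t * fact (k - t))"
    by (intro sum_mono card_permutes_prefix_image_le[OF assms(1)])
  also have "\<dots> = card \<F> * (fact t * fact (k - t))" by simp
  finally have "card {\<sigma>. \<sigma> permutes {..<k} \<and> \<sigma> ` {..<t} \<in> \<F>} * (k choose t) \<le>
      card \<F> * ((k choose t) * (fact t * fact (k - t)))"
    by (simp add: mult_le_mono1 mult_ac)
  also have "(k choose t) * (fact t * fact (k - t)) = fact k"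
    using binomial_fact_lemma[OF assms(1)] by (simp add: mult_ac)
  finally have "real (card {\<sigma>. \<sigma> permutes {..<k} \<and> \<sigma> ` {..<t} \<in> \<F>}) * real (k choose t) \<le>
      real (card \<F>) * real (fact k)"
    by (simp only: of_nat_mult[symmetric] of_nat_le_iff)
  moreover have "0 < real (k choose t)" using assms(1) by simp
  ultimately show ?thesis by (simp add: field_simps)
qed

lemma card_gapped_intervals_le: "card (gapped_intervals k t) \<le> 3 * ((k - t + 1) * (t + 1))"
proof -
  have "card (gapped_intervals k t) \<le> card ({..k - t} \<times> {..2::nat} \<times> {..t})"
    unfolding gapped_intervals_def by (rule card_image_le) simp
  also have "\<dots> = (k - t + 1) * (3 * (t + 1))"
    by (simp only: card_cartesian_product card_atMost Suc_eq_plus1) simp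
  finally show ?thesis by (simp only: mult.left_commute)
qed

lemma binomial_ge_power:
  assumes "2 * j \<le> k" "j \<le> t" "t + j \<le> k"
  shows "(real k / real j) ^ j \<le> real (k choose t)"
proof -
  have "k choose j \<le> k choose t"
  proof (cases "2 * t \<le> k")
    case True
    then show ?thesis using binomial_mono[of j t k] assms by simp
  next
    case False
    then have "k choose j \<le> k choose (k - t)" using binomial_mono[of j "k - t" k] assms by simp
    then show ?thesis using binomial_symmetric[of t k] assms by simp
  qed
  then have "real (k choose j) \<le> real (k choose t)" by simp
  moreover have "(real k / real j) ^ j \<le> real (k choose j)"
    using binomial_ge_n_over_k_pow_k[of j k] assms by simp
  ultimately show ?thesis by linarith
qed

lemma gapped_intervals_ratio_le_middle:
  assumes "4 \<le> t" "t + 4 \<le> k"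
  shows "real (card (gapped_intervals k t)) / (k choose t) \<le> 768 / real k ^ 2"
proof -
  have "(k - t + 1) * (t + 1) \<le> k * k" using assms by (intro mult_le_mono) auto
  then have "card (gapped_intervals k t) \<le> 3 * (k * k)"
    using card_gapped_intervals_le[of k t] by linarith
  then have "real (card (gapped_intervals k t)) \<le> real (3 * (k * k))" by (simp only: of_nat_le_iff)
  then have "real (card (gapped_intervals k t)) \<le> 3 * real k ^ 2" by (simp add: power2_eq_square)
  moreover have "(real k / 4) ^ 4 \<le> real (k choose t)"
    using binomial_ge_power[of 4 k t] assms by simp
  moreover have "0 < real k" using assms by simp
  ultimately have "real (card (gapped_intervals k t)) / (k choose t) \<le> 3 * real k ^ 2 / (real k / 4) ^ 4"
    by (intro frac_le) auto
  also have "\<dots> = 768 / real k ^ 2"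
    using \<open>0 < real k\<close> by (simp add: field_simps power4_eq_xxxx power2_eq_square)
  finally show ?thesis .
qed

lemma gapped_intervals_ratio_le_ends:
  assumes "4 \<le> k" "2 \<le> t" "t + 2 \<le> k" "t < 4 \<or> k < t + 4"
  shows "real (card (gapped_intervals k t)) / (k choose t) \<le> 48 / real k"
proof -
  have "(k - t + 1) * (t + 1) \<le> 4 * k"
  proof (cases "t < 4")
    case True
    then have "(k - t + 1) * (t + 1) \<le> k * 4" using assms by (intro mult_le_mono) auto
    then show ?thesis by simp
  next
    case False
    then show ?thesis using assms by (intro mult_le_mono) auto
  qed
  then have "card (gapped_intervals k t) \<le> 3 * (4 * k)"
    using card_gapped_intervals_le[of k t] by linarith
  then have "real (card (gapped_intervals k t)) \<le> real (3 * (4 * k))" by (simp only: of_nat_le_iff)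
  then have "real (card (gapped_intervals k t)) \<le> 12 * real k" by simp
  moreover have "(real k / 2) ^ 2 \<le> real (k choose t)"
    using binomial_ge_power[of 2 k t] assms by simp
  moreover have "0 < real k" using assms by simp
  ultimately have "real (card (gapped_intervals k t)) / (k choose t) \<le> 12 * real k / (real k / 2) ^ 2"
    by (intro frac_le) auto
  also have "\<dots> = 48 / real k" using \<open>0 < real k\<close> by (simp add: field_simps power2_eq_square)
  finally show ?thesis .
qed

lemma finite_permutes_subset: "finite {\<sigma>. \<sigma> permutes {..<k} \<and> P \<sigma>}"
  for P :: "(nat \<Rightarrow> nat) \<Rightarrow> bool"
  by (rule finite_subset[OF _ finite_permutations[OF finite_lessThan[of k]]]) auto

lemma card_permutes_subset_le_fact: "card {\<sigma>. \<sigma> permutes {..<k} \<and> P \<sigma>} \<le> fact k"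
  for P :: "(nat \<Rightarrow> nat) \<Rightarrow> bool"
proof -
  have "card {\<sigma>. \<sigma> permutes {..<k} \<and> P \<sigma>} \<le> card {\<sigma>. \<sigma> permutes {..<k}}"
    by (rule card_mono) (auto simp: finite_permutations)
  then show ?thesis using card_permutations[of "{..<k}" k] by simp
qed

lemma card_Un_fraction_le:
  fixes d :: real
  assumes "X \<subseteq> A \<union> B" "finite A" "finite B" "0 \<le> d"
  shows "card X / d \<le> card A / d + card B / d"
proof -
  have "card X \<le> card (A \<union> B)" using assms(1-3) by (intro card_mono) auto
  also have "\<dots> \<le> card A + card B" by (rule card_Un_le)
  finally have "real (card X) \<le> real (card A) + real (card B)" by simp
  then show ?thesis using \<open>0 \<le> d\<close> by (simp add: divide_right_mono flip: add_divide_distrib)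
qed

text \<open>Near the ends of \<open>{2..k-2}\<close> we only know \<open>(k choose t) \<ge> (k/2)\<^sup>2\<close>, but there are
  just four such \<open>t\<close>; in the middle \<open>(k choose t) \<ge> (k/4)\<^sup>4\<close>.\<close>

lemma gapped_intervals_ratio_sum_le:
  assumes "8 \<le> k"
  shows "(\<Sum>t\<in>{2..k - 2}. real (card (gapped_intervals k t)) / (k choose t)) \<le> 960 / k"
proof -
  define mid where "mid = {t. 4 \<le> t \<and> t + 4 \<le> k}"
  have "(\<Sum>t\<in>{2..k - 2}. real (card (gapped_intervals k t)) / (k choose t)) \<le>
      (\<Sum>t\<in>{2..k - 2}. if t \<in> mid then 768 / real k ^ 2 else 48 / real k)"
    using gapped_intervals_ratio_le_middle gapped_intervals_ratio_le_ends assms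
    unfolding mid_def by (intro sum_mono) (auto simp: not_le)
  also have "\<dots> = card ({2..k - 2} \<inter> mid) * (768 / real k ^ 2) + card ({2..k - 2} \<inter> - mid) * (48 / real k)"
    by (simp add: sum.If_cases)
  also have "\<dots> \<le> real k * (768 / real k ^ 2) + 4 * (48 / real k)"
  proof (intro add_mono mult_right_mono)
    have "card ({2..k - 2} \<inter> mid) \<le> card {2..k - 2}" by (intro card_mono) auto
    then show "real (card ({2..k - 2} \<inter> mid)) \<le> real k" by simp
    have "{2..k - 2} \<inter> - mid \<subseteq> {2..<4} \<union> {k - 3..<k - 1}" unfolding mid_def by auto
    then have "card ({2..k - 2} \<inter> - mid) \<le> card ({2..<4} \<union> {k - 3..<k - 1::nat})" by (intro card_mono) auto
    also have "\<dots> \<le> 4" using card_Un_le[of "{2..<4}" "{k - 3..<k - 1::nat}"] assms by simp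
    finally show "real (card ({2..k - 2} \<inter> - mid)) \<le> 4" by simp
  qed auto
  also have "\<dots> = 960 / real k" using assms by (simp add: field_simps power2_eq_square)
  finally show ?thesis .
qed

lemma gapped_prefix_fraction_le:
  assumes "8 \<le> k"
  shows "real (card {\<sigma>. \<sigma> permutes {..<k} \<and> has_gapped_prefix k \<sigma>}) / fact k \<le> 960 / k"
proof -
  define E where "E t = {\<sigma>. \<sigma> permutes {..<k} \<and> \<sigma> ` {..<t} \<in> gapped_intervals k t}" for t
  have "{\<sigma>. \<sigma> permutes {..<k} \<and> has_gapped_prefix k \<sigma>} \<subseteq> (\<Union>t\<in>{2..k - 2}. E t)"
    unfolding has_gapped_prefix_def E_def by fastforce
  then have "card {\<sigma>. \<sigma> permutes {..<k} \<and> has_gapped_prefix k \<sigma>} \<le> (\<Sum>t\<in>{2..k - 2}. card (E t))"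
    using card_mono[OF _ \<open>_ \<subseteq> _\<close>] card_UN_le[of "{2..k - 2}" E]
    by (simp add: E_def finite_permutes_subset)
  then have "real (card {\<sigma>. \<sigma> permutes {..<k} \<and> has_gapped_prefix k \<sigma>}) \<le> (\<Sum>t\<in>{2..k - 2}. real (card (E t)))"
    by (simp flip: of_nat_sum)
  then have "real (card {\<sigma>. \<sigma> permutes {..<k} \<and> has_gapped_prefix k \<sigma>}) / fact k \<le>
      (\<Sum>t\<in>{2..k - 2}. real (card (E t)) / fact k)"
    unfolding sum_divide_distrib[symmetric] by (rule divide_right_mono) simp
  also have "\<dots> \<le> (\<Sum>t\<in>{2..k - 2}. real (card (gapped_intervals k t)) / (k choose t))"
    unfolding E_def by (intro sum_mono permutes_prefix_image_fraction_le) (auto simp: gapped_intervals_def)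
  also have "\<dots> \<le> 960 / k" using gapped_intervals_ratio_sum_le[OF assms] .
  finally show ?thesis .
qed

lemma not_corner_free_prefix_image:
  assumes perm: "\<sigma> permutes {..<k}" and "2 \<le> k" and "\<not> corner_free k \<sigma>"
  shows "\<sigma> ` {..<1} \<in> {{0}, {k - 1}} \<or> \<sigma> ` {..<k - 1} \<in> {{..<k} - {0}, {..<k} - {k - 1}}"
proof -
  consider "\<sigma> 0 \<in> {0, k - 1}" | "\<sigma> (k - 1) \<in> {0, k - 1}"
    using assms(3) unfolding corner_free_def by blast
  then show ?thesis
  proof cases
    case 1
    have "\<sigma> ` {..<1} = {\<sigma> 0}" by (simp add: lessThan_Suc)
    moreover have "{\<sigma> 0} \<in> {{0}, {k - 1}}"
      using 1 by (elim insertE) (simp_all only: insert_iff empty_iff refl simp_thms)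
    ultimately show ?thesis by (intro disjI1) (simp only:)
  next
    case 2
    have "{..<k - 1} = {..<k} - {k - 1}" using \<open>2 \<le> k\<close> by auto
    then have "\<sigma> ` {..<k - 1} = \<sigma> ` {..<k} - \<sigma> ` {k - 1}"
      by (simp only: image_set_diff[OF permutes_inj[OF perm]])
    then have "\<sigma> ` {..<k - 1} = {..<k} - {\<sigma> (k - 1)}" using permutes_image[OF perm] by simp
    moreover have "{..<k} - {\<sigma> (k - 1)} \<in> {{..<k} - {0}, {..<k} - {k - 1}}"
      using 2 by (elim insertE) (simp_all only: insert_iff empty_iff refl simp_thms)
    ultimately show ?thesis by (intro disjI2) (simp only:)
  qed
qed

lemma corner_fraction_le:
  assumes "2 \<le> k"
  shows "real (card {\<sigma>. \<sigma> permutes {..<k} \<and> \<not> corner_free k \<sigma>}) / fact k \<le> 4 / k"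
proof -
  define A where "A = {\<sigma>. \<sigma> permutes {..<k} \<and> \<sigma> ` {..<1} \<in> {{0}, {k - 1}}}"
  define B where "B = {\<sigma>. \<sigma> permutes {..<k} \<and> \<sigma> ` {..<k - 1} \<in> {{..<k} - {0}, {..<k} - {k - 1}}}"
  have "{\<sigma>. \<sigma> permutes {..<k} \<and> \<not> corner_free k \<sigma>} \<subseteq> A \<union> B"
  proof
    fix \<sigma> assume "\<sigma> \<in> {\<sigma>. \<sigma> permutes {..<k} \<and> \<not> corner_free k \<sigma>}"
    then have "\<sigma> permutes {..<k}" "\<not> corner_free k \<sigma>" by simp_all
    then show "\<sigma> \<in> A \<union> B"
      using not_corner_free_prefix_image[OF _ assms] unfolding A_def B_def by simp
  qed
  then have "real (card {\<sigma>. \<sigma> permutes {..<k} \<and> \<not> corner_free k \<sigma>}) / fact k \<le>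
      real (card A) / fact k + real (card B) / fact k"
    by (rule card_Un_fraction_le) (simp_all add: A_def B_def finite_permutes_subset)
  also have "\<dots> \<le> real (card {{0}, {k - 1::nat}}) / (k choose 1) +
      real (card {{..<k} - {0}, {..<k} - {k - 1::nat}}) / (k choose (k - 1))"
    unfolding A_def B_def using assms by (intro add_mono permutes_prefix_image_fraction_le) auto
  also have "\<dots> \<le> 2 / k + 2 / k"
  proof -
    have "card {{0}, {k - 1::nat}} \<le> 2" "card {{..<k} - {0}, {..<k} - {k - 1::nat}} \<le> 2"
      by (rule card_insert_le_m1; simp)+
    moreover have "k choose 1 = k" "k choose (k - 1) = k"
      using binomial_symmetric[of 1 k] assms by simp_all
    ultimately show ?thesis
      by (simp only:) (intro add_mono divide_right_mono; simp)
  qed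
  finally show ?thesis by simp
qed

lemma irregular_fraction_le:
  assumes "8 \<le> k"
  shows "real (card {\<sigma>. \<sigma> permutes {..<k} \<and> \<not> regular_perm k \<sigma>}) / fact k \<le> 964 / k"
proof -
  have "{\<sigma>. \<sigma> permutes {..<k} \<and> \<not> regular_perm k \<sigma>} \<subseteq>
      {\<sigma>. \<sigma> permutes {..<k} \<and> \<not> corner_free k \<sigma>} \<union> {\<sigma>. \<sigma> permutes {..<k} \<and> has_gapped_prefix k \<sigma>}"
    unfolding regular_perm_def by auto
  then have "real (card {\<sigma>. \<sigma> permutes {..<k} \<and> \<not> regular_perm k \<sigma>}) / fact k \<le>
      real (card {\<sigma>. \<sigma> permutes {..<k} \<and> \<not> corner_free k \<sigma>}) / fact k +
      real (card {\<sigma>. \<sigma> permutes {..<k} \<and> has_gapped_prefix k \<sigma>}) / fact k"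
    by (rule card_Un_fraction_le) (simp_all add: finite_permutes_subset)
  also have "\<dots> \<le> 4 / k + 960 / k"
    using corner_fraction_le gapped_prefix_fraction_le assms by (intro add_mono) auto
  finally show ?thesis by simp
qed

lemma fact_le_card_sat_bounded_plus_irregular:
  "fact k \<le> card {\<sigma>. \<sigma> permutes {..<k} \<and> sat_bounded k (perm_matrix k \<sigma>)} +
    2 * card {\<sigma>. \<sigma> permutes {..<k} \<and> \<not> regular_perm k \<sigma>}"
proof -
  define S where "S = {\<sigma>. \<sigma> permutes {..<k} \<and> sat_bounded k (perm_matrix k \<sigma>)}"
  define I where "I = {\<sigma>. \<sigma> permutes {..<k} \<and> \<not> regular_perm k \<sigma>}"
  have "{\<sigma>. \<sigma> permutes {..<k}} \<subseteq> S \<union> I \<union> inv ` I"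
  proof
    fix \<sigma> assume "\<sigma> \<in> {\<sigma>. \<sigma> permutes {..<k}}"
    then have perm: "\<sigma> permutes {..<k}" by simp
    show "\<sigma> \<in> S \<union> I \<union> inv ` I"
    proof (cases "regular_perm k \<sigma> \<and> regular_perm k (inv \<sigma>)")
      case True
      then show ?thesis using sat_bounded_if_regular[OF perm] perm unfolding S_def by blast
    next
      case False
      then have "\<sigma> \<in> I \<or> inv \<sigma> \<in> I" using perm permutes_inv[OF perm] unfolding I_def by blast
      moreover have "\<sigma> = inv (inv \<sigma>)" using permutes_inv_inv[OF perm] by simp
      ultimately show ?thesis by blast
    qed
  qed
  then have "card {\<sigma>. \<sigma> permutes {..<k}} \<le> card (S \<union> I \<union> inv ` I)"
    by (rule card_mono[rotated]) (simp add: S_def I_def finite_permutes_subset)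
  then have "fact k \<le> card (S \<union> I \<union> inv ` I)" using card_permutations[of "{..<k}" k] by simp
  also have "\<dots> \<le> card S + card I + card (inv ` I)"
    using card_Un_le[of "S \<union> I" "inv ` I"] card_Un_le[of S I] by linarith
  also have "card (inv ` I) \<le> card I" by (rule card_image_le) (simp add: I_def finite_permutes_subset)
  finally show ?thesis unfolding S_def I_def by linarith
qed

lemma sat_bounded_fraction_ge:
  assumes "8 \<le> k"
  shows "1 - 1928 / real k \<le>
    real (card {\<sigma>. \<sigma> permutes {..<k} \<and> sat_bounded k (perm_matrix k \<sigma>)}) / real (fact k)"
proof -
  let ?S = "card {\<sigma>. \<sigma> permutes {..<k} \<and> sat_bounded k (perm_matrix k \<sigma>)}"
  let ?I = "card {\<sigma>. \<sigma> permutes {..<k} \<and> \<not> regular_perm k \<sigma>}"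
  have "real (fact k) \<le> real (?S + 2 * ?I)"
    using fact_le_card_sat_bounded_plus_irregular by (rule of_nat_mono)
  then have "1 \<le> real ?S / real (fact k) + 2 * (real ?I / real (fact k))"
    by (simp add: field_simps)
  moreover have "real ?I / real (fact k) \<le> 964 / real k"
    using irregular_fraction_le[OF assms] by simp
  ultimately show ?thesis by linarith
qed

theorem theorem1:
  shows "(\<lambda>k. real (card {\<sigma>. \<sigma> permutes {..<k} \<and> sat_bounded k (perm_matrix k \<sigma>)})
                / real (fact k)) \<longlonglongrightarrow> 1"
proof (rule tendsto_sandwich[of "\<lambda>k. 1 - 1928 / real k" _ _ "\<lambda>k. 1"])
  show "\<forall>\<^sub>F k in sequentially. 1 - 1928 / real k \<le>
      real (card {\<sigma>. \<sigma> permutes {..<k} \<and> sat_bounded k (perm_matrix k \<sigma>)}) / real (fact k)"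
    unfolding eventually_sequentially using sat_bounded_fraction_ge by blast
  have "real (card {\<sigma>. \<sigma> permutes {..<k} \<and> sat_bounded k (perm_matrix k \<sigma>)}) \<le> real (fact k)" for k
    by (rule of_nat_mono) (rule card_permutes_subset_le_fact)
  then show "\<forall>\<^sub>F k in sequentially.
      real (card {\<sigma>. \<sigma> permutes {..<k} \<and> sat_bounded k (perm_matrix k \<sigma>)}) / real (fact k) \<le> 1"
    by simp
  show "(\<lambda>k. 1 - 1928 / real k) \<longlonglongrightarrow> 1"
    using tendsto_diff[OF tendsto_const lim_const_over_n, of 1 1928] by simp
qed simp

end
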